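(* Consider a PWA system, as defined in the context, satisfying (A1)–(A5) with $\mu_c=1$. Then its inverse is given by the explicit, anticausal PWA system $x_{k+1}=\overline{\mathbf{A}}_k x_k+\overline{\mathbf{B}}_k y_{k+1}+\overline{\mathbf{F}}_k$, $u_k=\overline{\mathbf{C}}_k x_k+\overline{\mathbf{D}}_k y_{k+1}+\overline{\mathbf{G}}_k$, where $\overline{\mathbf{D}}_k=(C_{k+1}\mathbf{B}_k)^{-1}$, $\overline{\mathbf{C}}_k=-\overline{\mathbf{D}}_kC_{k+1}\mathbf{A}_k$, $\overline{\mathbf{G}}_k=-\overline{\mathbf{D}}_k(C_{k+1}\mathbf{F}_k+G_{k+1})$, $\overline{\mathbf{A}}_k=\mathbf{A}_k+\mathbf{B}_k\overline{\mathbf{C}}_k$, $\overline{\mathbf{B}}_k=\mathbf{B}_k\overline{\mathbf{D}}_k$, $\overline{\mathbf{F}}_k=\mathbf{F}_k+\mathbf{B}_k\overline{\mathbf{G}}_k$.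
   Context: A discrete-time piecewise affine (PWA) system is $x_{k+1}=\mathbf{A}_k x_k+\mathbf{B}_k u_k+\mathbf{F}_k$, $y_k=\mathbf{C}_k x_k+\mathbf{D}_k u_k+\mathbf{G}_k$, $k\in\mathbb{Z}$, with state $x_k\in\mathbb{R}^{n_x}$, input $u_k\in\mathbb{R}^{n_u}$, output $y_k\in\mathbb{R}^{n_y}$. For each $M\in\{A,B,F,C,D,G\}$, $\mathbf{M}_k=\sum_{q=1}^{|Q|} M_{q,k}K_q(\delta_k)$, where the $M_{q,k}$ are real matrices (possibly time-varying), $\delta_k=\delta(x_k)=H(Px_k-\theta)$ with $H$ the elementwise Heaviside step function, $P\in\mathbb{R}^{n_P\times n_x}$, $\theta\in\mathbb{R}^{n_P}$, and $K_q(\delta)=1$ if $\delta\in\Delta^*_q$ and $0$ otherwise ($\Delta^*_q$ a set of binary vectors). The locations $Q_q=\{x:\delta(x)\in\Delta^*_q\}$ are disjoint, have union $\mathbb{R}^{n_x}$, and each is a union of disjoint convex polytopes. The $q$-th component model is the affine system with matrices $A_{q,k},\dots,G_{q,k}$ and relative degree $\mu_q$ (number of time steps for an input value to influence the output). Assumptions: (A1) $x_0$ lies in the set of initial conditions from which every location is reachable in finite time; (A2) single-input single-output; (A3) switching depends only on the state, not the input; (A4) all component models have the same relative degree $\mu_c$ for all $q$ and $k$; (A5) $\mathbf{C}_k=C_k$, $\mathbf{D}_k=D_k$, $\mathbf{G}_k=G_k$, where $C_k,D_k,G_k$ may vary with time but are identical for all locations and known for all $k$. The inverse is explicit in that $u_k$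 and $x_{k+1}$ are given directly as functions of $x_k$ and $y_{k+1}$ (the selector functions being evaluated at $x_k$); it is anticausal since $u_k$ depends on the future output $y_{k+1}$. *)

theory Defs
  imports "HOL-Analysis.Analysis"
begin

definition heaviside :: "real \<Rightarrow> real" where
  "heaviside s = (if s \<ge> 0 then 1 else 0)"

definition pwa_delta :: "real^'n^'p \<Rightarrow> real^'p \<Rightarrow> real^'n \<Rightarrow> real^'p" where
  "pwa_delta P \<theta> x = (\<chi> i. heaviside ((P *v x - \<theta>) $ i))"

definition pwa_K :: "('q \<Rightarrow> (real^'p) set) \<Rightarrow> 'q \<Rightarrow> real^'p \<Rightarrow> real" where
  "pwa_K Dl q d = (if d \<in> Dl q then 1 else 0)"

definition pwa_mat :: "real^'n^'p \<Rightarrow> real^'p \<Rightarrow> ('q::finite \<Rightarrow> (real^'p) set)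
     \<Rightarrow> ('q \<Rightarrow> int \<Rightarrow> 'a::real_vector) \<Rightarrow> int \<Rightarrow> real^'n \<Rightarrow> 'a" where
  "pwa_mat P \<theta> Dl M k x = (\<Sum>q\<in>UNIV. pwa_K Dl q (pwa_delta P \<theta> x) *\<^sub>R M q k)"

definition outer :: "real^'n \<Rightarrow> real^'n \<Rightarrow> real^'n^'n" where
  "outer b c = (\<chi> i j. b $ i * c $ j)"

fun trans_mat :: "('q \<Rightarrow> int \<Rightarrow> real^'n^'n) \<Rightarrow> 'q \<Rightarrow> int \<Rightarrow> nat \<Rightarrow> real^'n^'n" where
  "trans_mat A q s 0 = mat 1"
| "trans_mat A q s (Suc j) = A q (s + int j) ** trans_mat A q s j"

text \<open>Markov parameter of component model q: influence of input at time k on the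
  output at time k+j.\<close>
fun markov :: "('q \<Rightarrow> int \<Rightarrow> real^'n^'n) \<Rightarrow> ('q \<Rightarrow> int \<Rightarrow> real^'n) \<Rightarrow> (int \<Rightarrow> real^'n)
     \<Rightarrow> (int \<Rightarrow> real) \<Rightarrow> 'q \<Rightarrow> int \<Rightarrow> nat \<Rightarrow> real" where
  "markov A B C D q k 0 = D k"
| "markov A B C D q k (Suc j) = C (k + int j + 1) \<bullet> (trans_mat A q (k + 1) j *v B q k)"

definition has_rel_deg :: "('q \<Rightarrow> int \<Rightarrow> real^'n^'n) \<Rightarrow> ('q \<Rightarrow> int \<Rightarrow> real^'n) \<Rightarrow> (int \<Rightarrow> real^'n)
     \<Rightarrow> (int \<Rightarrow> real) \<Rightarrow> 'q \<Rightarrow> int \<Rightarrow> nat \<Rightarrow> bool" where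
  "has_rel_deg A B C D q k \<mu> \<longleftrightarrow> (\<forall>j<\<mu>. markov A B C D q k j = 0) \<and> markov A B C D q k \<mu> \<noteq> 0"

definition all_locations_reachable ::
  "real^'n^'p \<Rightarrow> real^'p \<Rightarrow> ('q::finite \<Rightarrow> (real^'p) set)
   \<Rightarrow> ('q \<Rightarrow> int \<Rightarrow> real^'n^'n) \<Rightarrow> ('q \<Rightarrow> int \<Rightarrow> real^'n) \<Rightarrow> ('q \<Rightarrow> int \<Rightarrow> real^'n)
   \<Rightarrow> real^'n \<Rightarrow> bool" where
  "all_locations_reachable P \<theta> Dl A B F x0 \<longleftrightarrow>
     (\<forall>q. \<exists>(x::int \<Rightarrow> real^'n) (u::int \<Rightarrow> real) (N::nat).
        x 0 = x0 \<and>
        (\<forall>k\<ge>0. x (k+1) = pwa_mat P \<theta> Dl A k (x k) *v x k + u k *\<^sub>R pwa_mat P \<theta> Dl B k (x k)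
                           + pwa_mat P \<theta> Dl F k (x k)) \<and>
        pwa_delta P \<theta> (x (int N)) \<in> Dl q)"

end

theory Submission
  imports Defs
begin

text \<open>With relative degree one the feedthrough D_k vanishes, so y_{k+1} = C_{k+1} x_{k+1} + G_{k+1}
  depends on u_k only through the scalar C_{k+1} B_k, which is nonzero. Substituting the state
  equation into the output equation therefore lets one solve for u_k and then eliminate u_k from
  the state equation; each step is reversible, so the two systems have the same trajectories.
  Only the location active at x_k matters, since the selectors pick out exactly one component
  model.\<close>

lemma outer_mult_vector: "outer b c *v x = (c \<bullet> x) *\<^sub>R (b::real^'n)"
  by (simp add: outer_def matrix_vector_mult_def inner_vec_def vec_eq_iff sum_distrib_left
      mult.commute mult.left_commute)

lemma pwa_mat_eq_active_component:
  assumes "\<And>z. \<exists>!q. pwa_delta P \<theta> z \<in> Dl q" and "pwa_delta P \<theta> z \<in> Dl q0"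
  shows "pwa_mat P \<theta> Dl M k z = M q0 k"
proof -
  have "pwa_mat P \<theta> Dl M k z = (\<Sum>q\<in>UNIV. if q = q0 then M q k else 0)"
    unfolding pwa_mat_def
    by (rule sum.cong) (use assms in \<open>auto simp: pwa_K_def\<close>)
  then show ?thesis by simp
qed

lemma has_rel_deg_1_iff:
  "has_rel_deg A B C D q k 1 \<longleftrightarrow> D k = 0 \<and> C (k + 1) \<bullet> B q k \<noteq> 0"
  by (simp add: has_rel_deg_def)

lemma affine_step_solve_input:
  fixes a :: "real^'n^'n" and b f c x x' :: "real^'n"
  assumes "c \<bullet> b \<noteq> 0" and "x' = a *v x + u *\<^sub>R b + f"
  shows "y' = c \<bullet> x' + g \<longleftrightarrow> u = (y' - c \<bullet> (a *v x) - c \<bullet> f - g) / (c \<bullet> b)"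
proof -
  have "c \<bullet> x' + g = c \<bullet> (a *v x) + u * (c \<bullet> b) + c \<bullet> f + g"
    using assms(2) by (simp add: inner_add_right)
  then show ?thesis
    using assms(1) by (auto simp: field_simps)
qed

lemma affine_step_inverse:
  fixes a :: "real^'n^'n" and b f c x x' :: "real^'n"
  assumes "c \<bullet> b \<noteq> 0"
  shows "(x' = a *v x + u *\<^sub>R b + f \<and> y' = c \<bullet> x' + g) \<longleftrightarrow>
    (let Dbar = inverse (c \<bullet> b);
         Cbar = - (Dbar *\<^sub>R (c v* a));
         Gbar = - (Dbar * (c \<bullet> f + g));
         Abar = a + outer b Cbar;
         Bbar = Dbar *\<^sub>R b;
         Fbar = f + Gbar *\<^sub>R b
     in x' = Abar *v x + y' *\<^sub>R Bbar + Fbar \<and> u = Cbar \<bullet> x + Dbar * y' + Gbar)"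
proof -
  define d where "d = inverse (c \<bullet> b)"
  define v where "v = d * (y' - c \<bullet> (a *v x) - c \<bullet> f - g)"
  have input: "(- (d *\<^sub>R (c v* a))) \<bullet> x + d * y' + - (d * (c \<bullet> f + g)) = v"
    by (simp add: v_def dot_lmul_matrix algebra_simps)
  have state: "(a + outer b (- (d *\<^sub>R (c v* a)))) *v x + y' *\<^sub>R (d *\<^sub>R b)
      + (f + (- (d * (c \<bullet> f + g))) *\<^sub>R b) = a *v x + v *\<^sub>R b + f"
    by (simp add: v_def matrix_vector_mult_add_rdistrib outer_mult_vector dot_lmul_matrix
        algebra_simps)
  have "(x' = a *v x + u *\<^sub>R b + f \<and> y' = c \<bullet> x' + g) \<longleftrightarrow> (x' = a *v x + u *\<^sub>R b + f \<and> u = v)"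
    using affine_step_solve_input[OF assms] by (auto simp: v_def d_def divide_inverse mult.commute)
  then show ?thesis
    unfolding Let_def d_def[symmetric] input state by auto
qed

lemma state_dependent_affine_inverse:
  fixes Ab :: "int \<Rightarrow> real^'n \<Rightarrow> real^'n^'n" and Bb Fb :: "int \<Rightarrow> real^'n \<Rightarrow> real^'n"
    and C :: "int \<Rightarrow> real^'n" and D G :: "int \<Rightarrow> real"
    and x :: "int \<Rightarrow> real^'n" and u y :: "int \<Rightarrow> real"
  assumes "\<And>k. D k = 0" and "\<And>k z. C (k + 1) \<bullet> Bb k z \<noteq> 0"
  shows "(\<forall>k. x (k+1) = Ab k (x k) *v x k + u k *\<^sub>R Bb k (x k) + Fb k (x k)
             \<and> y k = C k \<bullet> x k + D k * u k + G k)
     \<longleftrightarrow>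
     (\<forall>k. let Ak = Ab k (x k); Bk = Bb k (x k); Fk = Fb k (x k);
              Dbar = inverse (C (k+1) \<bullet> Bk);
              Cbar = - (Dbar *\<^sub>R (C (k+1) v* Ak));
              Gbar = - (Dbar * (C (k+1) \<bullet> Fk + G (k+1)));
              Abar = Ak + outer Bk Cbar;
              Bbar = Dbar *\<^sub>R Bk;
              Fbar = Fk + Gbar *\<^sub>R Bk
          in x (k+1) = Abar *v x k + y (k+1) *\<^sub>R Bbar + Fbar
             \<and> u k = Cbar \<bullet> x k + Dbar * y (k+1) + Gbar)"
    (is "_ \<longleftrightarrow> ?inverse")
proof -
  have output_shift: "(\<forall>k. y k = C k \<bullet> x k + G k) \<longleftrightarrow>
      (\<forall>k. y (k+1) = C (k+1) \<bullet> x (k+1) + G (k+1))"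
    by (metis diff_add_cancel)
  have "(\<forall>k. x (k+1) = Ab k (x k) *v x k + u k *\<^sub>R Bb k (x k) + Fb k (x k)
             \<and> y k = C k \<bullet> x k + D k * u k + G k) \<longleftrightarrow>
      (\<forall>k. x (k+1) = Ab k (x k) *v x k + u k *\<^sub>R Bb k (x k) + Fb k (x k)
             \<and> y (k+1) = C (k+1) \<bullet> x (k+1) + G (k+1))"
    using output_shift by (auto simp: assms(1))
  also have "\<dots> \<longleftrightarrow> ?inverse"
    by (rule iff_allI) (use affine_step_inverse[OF assms(2)] in \<open>simp only: Let_def\<close>)
  finally show ?thesis .
qed

theorem corollary1:
  fixes P :: "real^'n^'p" and \<theta> :: "real^'p"
    and Dl :: "'q::finite \<Rightarrow> (real^'p) set"
    and A :: "'q \<Rightarrow> int \<Rightarrow> real^'n^'n" and B F :: "'q \<Rightarrow> int \<Rightarrow> real^'n"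
    and C :: "int \<Rightarrow> real^'n" and D G :: "int \<Rightarrow> real"
    and x0 :: "real^'n"
  assumes partition: "\<And>z. \<exists>!q. pwa_delta P \<theta> z \<in> Dl q"
    and binary: "\<And>q. Dl q \<subseteq> {d. \<forall>i. d $ i \<in> {0, 1}}"
    and A1: "all_locations_reachable P \<theta> Dl A B F x0"
    and A4: "\<And>q k. has_rel_deg A B C D q k 1"
  shows "\<forall>(x::int \<Rightarrow> real^'n) (u::int \<Rightarrow> real) (y::int \<Rightarrow> real). x 0 = x0 \<longrightarrow>
    ((\<forall>k. x (k+1) = pwa_mat P \<theta> Dl A k (x k) *v x k + u k *\<^sub>R pwa_mat P \<theta> Dl B k (x k)
                     + pwa_mat P \<theta> Dl F k (x k)
         \<and> y k = C k \<bullet> x k + D k * u k + G k)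
     \<longleftrightarrow>
     (\<forall>k. let Ak = pwa_mat P \<theta> Dl A k (x k); Bk = pwa_mat P \<theta> Dl B k (x k);
              Fk = pwa_mat P \<theta> Dl F k (x k);
              Dbar = inverse (C (k+1) \<bullet> Bk);
              Cbar = - (Dbar *\<^sub>R (C (k+1) v* Ak));
              Gbar = - (Dbar * (C (k+1) \<bullet> Fk + G (k+1)));
              Abar = Ak + outer Bk Cbar;
              Bbar = Dbar *\<^sub>R Bk;
              Fbar = Fk + Gbar *\<^sub>R Bk
          in x (k+1) = Abar *v x k + y (k+1) *\<^sub>R Bbar + Fbar
             \<and> u k = Cbar \<bullet> x k + Dbar * y (k+1) + Gbar))"
proof -
  \<comment> \<open>The inversion is pointwise in k.\<close>
  have no_feedthrough: "D k = 0" for k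
    using A4[of undefined k] unfolding has_rel_deg_1_iff by blast
  have input_gain_nonzero: "C (k + 1) \<bullet> pwa_mat P \<theta> Dl B k z \<noteq> 0" for k z
  proof -
    obtain q where "pwa_delta P \<theta> z \<in> Dl q" using partition by blast
    then have "pwa_mat P \<theta> Dl B k z = B q k"
      using pwa_mat_eq_active_component[OF partition] by blast
    then show ?thesis using A4[of q k] unfolding has_rel_deg_1_iff by simp
  qed
  show ?thesis
    using state_dependent_affine_inverse[where C = C and D = D and Ab = "pwa_mat P \<theta> Dl A"
        and Bb = "pwa_mat P \<theta> Dl B" and Fb = "pwa_mat P \<theta> Dl F",
        OF no_feedthrough input_gain_nonzero]
    by blast
qed

end
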